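(* $\mathfrak{b}_{\mathrm{game}}^{\mathrm{I}} = \mathfrak{b}$, where $\mathfrak{b}$ is the bounding number.
   Context: For $x,y\in\omega^\omega$, $x\le^* y$ means $x(n)\le y(n)$ for all but finitely many $n$. $\mathfrak{b}$ is the least size of a family $\mathcal{A}\subseteq\omega^\omega$ such that no single $x\in\omega^\omega$ satisfies $y\le^* x$ for all $y\in\mathcal{A}$. For $\mathcal{A}\subseteq\omega^\omega$, the bounding game with respect to $\mathcal{A}$ is the infinite two-player game in which, at round $k$, Player I plays $n_k\in\omega$ and then Player II plays $i_k\in\{0,1\}$. Player II wins iff $i_k=1$ for infinitely many $k$ and there is $g\in\mathcal{A}$ with $\{k\in\omega: i_k=1\}=\{k\in\omega: n_k<g(k)\}$. $\mathfrak{b}_{\mathrm{game}}^{\mathrm{I}}$ is the least $|\mathcal{A}|$ such that Player I has no winning strategy in the bounding game with respect to $\mathcal{A}$. *)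

theory Defs
  imports Main
begin

definition le_star :: "(nat \<Rightarrow> nat) \<Rightarrow> (nat \<Rightarrow> nat) \<Rightarrow> bool" where
  "le_star x y \<longleftrightarrow> finite {n. \<not> x n \<le> y n}"

definition unbounded_family :: "(nat \<Rightarrow> nat) set \<Rightarrow> bool" where
  "unbounded_family A \<longleftrightarrow> \<not> (\<exists>x. \<forall>y\<in>A. le_star y x)"

text \<open>A strategy for Player I maps the finite history of the play so far
 (list of pairs (n_j, i_j), j < k) to the move n_k. Player II's moves are
 given as a sequence of booleans (True = 1, False = 0).\<close>
type_synonym stratI = "(nat \<times> bool) list \<Rightarrow> nat"

fun history :: "stratI \<Rightarrow> (nat \<Rightarrow> bool) \<Rightarrow> nat \<Rightarrow> (nat \<times> bool) list" where
  "history \<sigma> i 0 = []"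
| "history \<sigma> i (Suc k) = history \<sigma> i k @ [(\<sigma> (history \<sigma> i k), i k)]"

definition movesI :: "stratI \<Rightarrow> (nat \<Rightarrow> bool) \<Rightarrow> nat \<Rightarrow> nat" where
  "movesI \<sigma> i k = \<sigma> (history \<sigma> i k)"

definition II_wins :: "(nat \<Rightarrow> nat) set \<Rightarrow> (nat \<Rightarrow> nat) \<Rightarrow> (nat \<Rightarrow> bool) \<Rightarrow> bool" where
  "II_wins A n i \<longleftrightarrow> infinite {k. i k} \<and> (\<exists>g\<in>A. {k. i k} = {k. n k < g k})"

definition winning_stratI :: "(nat \<Rightarrow> nat) set \<Rightarrow> stratI \<Rightarrow> bool" where
  "winning_stratI A \<sigma> \<longleftrightarrow> (\<forall>i. \<not> II_wins A (movesI \<sigma> i) i)"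

definition I_no_winning :: "(nat \<Rightarrow> nat) set \<Rightarrow> bool" where
  "I_no_winning A \<longleftrightarrow> \<not> (\<exists>\<sigma>. winning_stratI A \<sigma>)"

end

theory Submission
  imports Defs
begin

text \<open>Player I has a winning strategy exactly when the family is bounded. If every member
  of A is eventually dominated by x, playing n_k = x(k) wins for I. Conversely, the k-th
  move of any strategy \<sigma> depends only on II's first k bits, so it is bounded by some h(k);
  a member g of an unbounded family exceeds h infinitely often, and II beats \<sigma> by answering
  1 exactly when n_k < g(k). Hence both cardinals are the least size of an unbounded family.\<close>

lemma history_cong: "(\<And>j. j < k \<Longrightarrow> i j = i' j) \<Longrightarrow> history \<sigma> i k = history \<sigma> i' k"
  by (induction k) auto

lemma finite_range_movesI: "finite (range (\<lambda>i. movesI \<sigma> i k))"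
proof -
  have "movesI \<sigma> i k = movesI \<sigma> (\<lambda>j. map i [0..<k] ! j) k" for i
    unfolding movesI_def by (rule arg_cong[of _ _ \<sigma>], rule history_cong) simp
  then have "range (\<lambda>i. movesI \<sigma> i k) \<subseteq> (\<lambda>bs. movesI \<sigma> (\<lambda>j. bs ! j) k) ` {bs. length bs = k}"
    by force
  moreover have "finite {bs::bool list. length bs = k}"
    using finite_lists_length_eq[of "UNIV::bool set"] by simp
  ultimately show ?thesis
    using finite_subset by blast
qed

definition max_moveI :: "stratI \<Rightarrow> nat \<Rightarrow> nat" where
  "max_moveI \<sigma> k = Max (range (\<lambda>i. movesI \<sigma> i k))"

lemma movesI_le_max_moveI: "movesI \<sigma> i k \<le> max_moveI \<sigma> k"
  unfolding max_moveI_def using finite_range_movesI by (intro Max_ge) auto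

fun history_against :: "stratI \<Rightarrow> (nat \<Rightarrow> nat) \<Rightarrow> nat \<Rightarrow> (nat \<times> bool) list" where
  "history_against \<sigma> g 0 = []"
| "history_against \<sigma> g (Suc k) =
     history_against \<sigma> g k @ [(\<sigma> (history_against \<sigma> g k), \<sigma> (history_against \<sigma> g k) < g k)]"

lemma history_eq_history_against:
  "history \<sigma> (\<lambda>k. \<sigma> (history_against \<sigma> g k) < g k) k = history_against \<sigma> g k"
  by (induction k) auto

lemma unbounded_imp_I_no_winning:
  assumes "unbounded_family A"
  shows "I_no_winning A"
  unfolding I_no_winning_def winning_stratI_def
proof clarsimp
  fix \<sigma>
  obtain g where g: "g \<in> A" "\<not> le_star g (max_moveI \<sigma>)"
    using assms unfolding unbounded_family_def by blast
  define i where "i k \<longleftrightarrow> \<sigma> (history_against \<sigma> g k) < g k" for k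
  have ones: "{k. i k} = {k. movesI \<sigma> i k < g k}"
    unfolding movesI_def i_def history_eq_history_against ..
  have "{k. \<not> g k \<le> max_moveI \<sigma> k} \<subseteq> {k. i k}"
  proof
    fix k
    assume "k \<in> {k. \<not> g k \<le> max_moveI \<sigma> k}"
    then show "k \<in> {k. i k}"
      unfolding ones using movesI_le_max_moveI[of \<sigma> i k] by simp
  qed
  moreover have "infinite {k. \<not> g k \<le> max_moveI \<sigma> k}"
    using g(2) unfolding le_star_def .
  ultimately have "infinite {k. i k}"
    using finite_subset by blast
  then show "\<exists>i. II_wins A (movesI \<sigma> i) i"
    unfolding II_wins_def using g(1) ones by blast
qed

lemma length_history [simp]: "length (history \<sigma> i k) = k"
  by (induction k) auto

lemma bounded_imp_winning_stratI:
  assumes "\<forall>y\<in>A. le_star y x"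
  shows "winning_stratI A (\<lambda>h. x (length h))"
  unfolding winning_stratI_def II_wins_def
proof (intro allI notI, elim conjE bexE)
  fix i g
  assume "infinite {k. i k}" "g \<in> A" "{k. i k} = {k. movesI (\<lambda>h. x (length h)) i k < g k}"
  moreover have "finite {k. x k < g k}"
    using assms \<open>g \<in> A\<close> unfolding le_star_def by (simp add: not_le)
  ultimately show False
    by (simp add: movesI_def)
qed

lemma I_no_winning_iff_unbounded: "I_no_winning A \<longleftrightarrow> unbounded_family A"
proof
  show "I_no_winning A \<Longrightarrow> unbounded_family A"
    using bounded_imp_winning_stratI unfolding I_no_winning_def unbounded_family_def by blast
qed (rule unbounded_imp_I_no_winning)

lemma unbounded_family_UNIV: "unbounded_family UNIV"
  unfolding unbounded_family_def le_star_def
proof (rule notI, elim exE)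
  fix x :: "nat \<Rightarrow> nat"
  assume "\<forall>y\<in>UNIV. finite {n. \<not> y n \<le> x n}"
  from this[rule_format, of "\<lambda>m. Suc (x m)"] have "finite {n. \<not> Suc (x n) \<le> x n}"
    by simp
  then show False
    by simp
qed

lemma exists_card_of_minimal:
  assumes "P A"
  shows "\<exists>A. P A \<and> (\<forall>A'. P A' \<longrightarrow> (card_of A, card_of A') \<in> ordLeq)"
proof -
  let ?R = "{card_of A | A. P A}"
  have "?R \<noteq> {}"
    using assms by blast
  moreover have "\<forall>r\<in>?R. Card_order r"
    using card_of_Card_order by blast
  ultimately obtain r where "r \<in> ?R" "\<forall>r'\<in>?R. (r, r') \<in> ordLeq"
    by (rule exists_minim_Card_order[elim_format]) blast
  then show ?thesis
    by blast
qed

theorem mainTheorem1: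
  shows "\<exists>A B. unbounded_family A
             \<and> (\<forall>A'. unbounded_family A' \<longrightarrow> (card_of A, card_of A') \<in> ordLeq)
             \<and> I_no_winning B
             \<and> (\<forall>B'. I_no_winning B' \<longrightarrow> (card_of B, card_of B') \<in> ordLeq)
             \<and> (card_of A, card_of B) \<in> ordIso"
proof -
  obtain A where "unbounded_family A"
    and "\<forall>A'. unbounded_family A' \<longrightarrow> (card_of A, card_of A') \<in> ordLeq"
    using exists_card_of_minimal[where P = unbounded_family, OF unbounded_family_UNIV] by blast
  with card_of_refl[of A] show ?thesis
    unfolding I_no_winning_iff_unbounded by (intro exI conjI)
qed

end
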